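(* Let $R$ be an arithmetic ring such that $\mathrm{Minspec}(R)$ is compact in the Zariski topology and every finitely generated $R$-module has a pure-composition series with indecomposable cyclic factors. Then $\mathrm{Minspec}(R)$ is finite.
   Context: All rings are commutative with identity. $R$ is arithmetic if $R_P$ is a valuation ring for every maximal ideal $P$. $\mathrm{Minspec}(R)$ is the set of minimal prime ideals of $R$ with the Zariski topology. A pure-composition series of $M$ is a finite chain $\{0\}=M_0\subset\dots\subset M_n=M$ of pure submodules (inclusion stays injective after tensoring with any module). *)

theory Defs
  imports "HOL-Analysis.Analysis" "HOL-Algebra.Algebra"
begin

definition loc_rel :: "('a, 'c) ring_scheme \<Rightarrow> 'a set \<Rightarrow> (('a \<times> 'a) \<times> ('a \<times> 'a)) set" where
  "loc_rel R S = {((a, s), (b, t)). a \<in> carrier R \<and> b \<in> carrier R \<and> s \<in> S \<and> t \<in> S \<and>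
     (\<exists>u\<in>S. u \<otimes>\<^bsub>R\<^esub> ((a \<otimes>\<^bsub>R\<^esub> t) \<ominus>\<^bsub>R\<^esub> (b \<otimes>\<^bsub>R\<^esub> s)) = \<zero>\<^bsub>R\<^esub>)}"

definition loc_class :: "('a, 'c) ring_scheme \<Rightarrow> 'a set \<Rightarrow> 'a \<times> 'a \<Rightarrow> ('a \<times> 'a) set" where
  "loc_class R S p = loc_rel R S `` {p}"

definition localization :: "('a, 'c) ring_scheme \<Rightarrow> 'a set \<Rightarrow> ('a \<times> 'a) set ring" where
  "localization R S =
    \<lparr> carrier = (carrier R \<times> S) // loc_rel R S,
      mult = (\<lambda>U V. let p = (SOME p. p \<in> U); q = (SOME q. q \<in> V) in
          loc_class R S (fst p \<otimes>\<^bsub>R\<^esub> fst q, snd p \<otimes>\<^bsub>R\<^esub> snd q)),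
      one = loc_class R S (\<one>\<^bsub>R\<^esub>, \<one>\<^bsub>R\<^esub>),
      ring.zero = loc_class R S (\<zero>\<^bsub>R\<^esub>, \<one>\<^bsub>R\<^esub>),
      ring.add = (\<lambda>U V. let p = (SOME p. p \<in> U); q = (SOME q. q \<in> V) in
          loc_class R S ((fst p \<otimes>\<^bsub>R\<^esub> snd q) \<oplus>\<^bsub>R\<^esub> (fst q \<otimes>\<^bsub>R\<^esub> snd p), snd p \<otimes>\<^bsub>R\<^esub> snd q)) \<rparr>"

text \<open>Valuation ring in the sense of chain rings (not necessarily domains): nonzero commutative ring
  in which any two elements are comparable under divisibility.\<close>
definition valuation_ring :: "('a, 'c) ring_scheme \<Rightarrow> bool" where
  "valuation_ring A \<longleftrightarrow> cring A \<and> \<one>\<^bsub>A\<^esub> \<noteq> \<zero>\<^bsub>A\<^esub> \<and>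
     (\<forall>a\<in>carrier A. \<forall>b\<in>carrier A.
        (\<exists>c\<in>carrier A. b = a \<otimes>\<^bsub>A\<^esub> c) \<or> (\<exists>c\<in>carrier A. a = b \<otimes>\<^bsub>A\<^esub> c))"

definition arithmetic :: "('a, 'c) ring_scheme \<Rightarrow> bool" where
  "arithmetic R \<longleftrightarrow> cring R \<and>
     (\<forall>P. maximalideal P R \<longrightarrow> valuation_ring (localization R (carrier R - P)))"

definition Minspec :: "('a, 'c) ring_scheme \<Rightarrow> 'a set set" where
  "Minspec R = {P. primeideal P R \<and> (\<forall>Q. primeideal Q R \<and> Q \<subseteq> P \<longrightarrow> Q = P)}"

definition zariski :: "('a, 'c) ring_scheme \<Rightarrow> 'a set topology" where
  "zariski R = topology_generated_by {{P. primeideal P R \<and> a \<notin> P} | a. a \<in> carrier R}"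

definition gen_sub :: "('a, 'c) ring_scheme \<Rightarrow> ('a, 'm, 'd) module_scheme \<Rightarrow> 'm set \<Rightarrow> 'm set" where
  "gen_sub R M S = carrier M \<inter> \<Inter>{N. submodule N R M \<and> S \<subseteq> N}"

definition fin_gen :: "('a, 'c) ring_scheme \<Rightarrow> ('a, 'm, 'd) module_scheme \<Rightarrow> bool" where
  "fin_gen R M \<longleftrightarrow> (\<exists>S. finite S \<and> S \<subseteq> carrier M \<and> gen_sub R M S = carrier M)"

definition cyclic_mod :: "('a, 'c) ring_scheme \<Rightarrow> ('a, 'm, 'd) module_scheme \<Rightarrow> bool" where
  "cyclic_mod R M \<longleftrightarrow> (\<exists>x\<in>carrier M. gen_sub R M {x} = carrier M)"

definition indecomposable :: "('a, 'c) ring_scheme \<Rightarrow> ('a, 'm, 'd) module_scheme \<Rightarrow> bool" where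
  "indecomposable R M \<longleftrightarrow> carrier M \<noteq> {\<zero>\<^bsub>M\<^esub>} \<and>
     (\<forall>A B. submodule A R M \<and> submodule B R M \<and> A \<inter> B = {\<zero>\<^bsub>M\<^esub>} \<and>
            gen_sub R M (A \<union> B) = carrier M \<longrightarrow> A = {\<zero>\<^bsub>M\<^esub>} \<or> B = {\<zero>\<^bsub>M\<^esub>})"

text \<open>Quotient module M/N (cosets N + x); the multiplicative ring fields are irrelevant.\<close>
definition quot_mod :: "('a, 'c) ring_scheme \<Rightarrow> ('a, 'm, 'd) module_scheme \<Rightarrow> 'm set \<Rightarrow> ('a, 'm set) module" where
  "quot_mod R M N =
    \<lparr> carrier = {N +>\<^bsub>M\<^esub> x | x. x \<in> carrier M},
      mult = (\<lambda>U V. N), one = N,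
      ring.zero = N,
      ring.add = (\<lambda>U V. U <+>\<^bsub>M\<^esub> V),
      smult = (\<lambda>r U. \<Union>x\<in>U. N +>\<^bsub>M\<^esub> (r \<odot>\<^bsub>M\<^esub> x)) \<rparr>"

definition delta :: "'p \<Rightarrow> 'p \<Rightarrow> int" where
  "delta p = (\<lambda>q. if q = p then 1 else 0)"

text \<open>The subgroup of the free abelian group on X \<times> M generated by the defining relations of
  the tensor product; X \<otimes>_R M is the quotient by it.\<close>
inductive_set tensor_rel :: "('a, 'c) ring_scheme \<Rightarrow> ('a, 'x, 'd) module_scheme \<Rightarrow>
    ('a, 'm, 'e) module_scheme \<Rightarrow> ('x \<times> 'm \<Rightarrow> int) set"
  for R T M where
  tr_zero: "(\<lambda>_. 0) \<in> tensor_rel R T M"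
| tr_ladd: "\<lbrakk>x \<in> carrier T; x' \<in> carrier T; m \<in> carrier M\<rbrakk> \<Longrightarrow>
     (\<lambda>q. delta (x \<oplus>\<^bsub>T\<^esub> x', m) q - delta (x, m) q - delta (x', m) q) \<in> tensor_rel R T M"
| tr_radd: "\<lbrakk>x \<in> carrier T; m \<in> carrier M; m' \<in> carrier M\<rbrakk> \<Longrightarrow>
     (\<lambda>q. delta (x, m \<oplus>\<^bsub>M\<^esub> m') q - delta (x, m) q - delta (x, m') q) \<in> tensor_rel R T M"
| tr_bal: "\<lbrakk>r \<in> carrier R; x \<in> carrier T; m \<in> carrier M\<rbrakk> \<Longrightarrow>
     (\<lambda>q. delta (r \<odot>\<^bsub>T\<^esub> x, m) q - delta (x, r \<odot>\<^bsub>M\<^esub> m) q) \<in> tensor_rel R T M"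
| tr_add: "\<lbrakk>f \<in> tensor_rel R T M; g \<in> tensor_rel R T M\<rbrakk> \<Longrightarrow> (\<lambda>q. f q + g q) \<in> tensor_rel R T M"
| tr_neg: "f \<in> tensor_rel R T M \<Longrightarrow> (\<lambda>q. - f q) \<in> tensor_rel R T M"

type_synonym 'a std_module = "('a, 'a list set) module"

text \<open>N is a pure submodule of M: for every R-module X, the map X \<otimes> N \<rightarrow> X \<otimes> M is injective,
  i.e. a formal sum over X \<times> N that vanishes in X \<otimes> M already vanishes in X \<otimes> N.\<close>
definition pure_sub :: "('a, 'c) ring_scheme \<Rightarrow> ('a, 'm, 'd) module_scheme \<Rightarrow> 'm set \<Rightarrow> bool" where
  "pure_sub R M N \<longleftrightarrow> submodule N R M \<and>
     (\<forall>T :: 'a std_module. module R T \<longrightarrow>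
        (\<forall>f. finite {p. f p \<noteq> 0} \<and> {p. f p \<noteq> 0} \<subseteq> carrier T \<times> N \<and> f \<in> tensor_rel R T M
             \<longrightarrow> f \<in> tensor_rel R T (M\<lparr>carrier := N\<rparr>)))"

definition has_pcs_ic :: "('a, 'c) ring_scheme \<Rightarrow> ('a, 'm, 'd) module_scheme \<Rightarrow> bool" where
  "has_pcs_ic R M \<longleftrightarrow> (\<exists>(Ms :: nat \<Rightarrow> 'm set) n.
     Ms 0 = {\<zero>\<^bsub>M\<^esub>} \<and> Ms n = carrier M \<and>
     (\<forall>i\<le>n. pure_sub R M (Ms i)) \<and>
     (\<forall>i<n. Ms i \<subset> Ms (Suc i) \<and>
        cyclic_mod R (quot_mod R (M\<lparr>carrier := Ms (Suc i)\<rparr>) (Ms i)) \<and>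
        indecomposable R (quot_mod R (M\<lparr>carrier := Ms (Suc i)\<rparr>) (Ms i))))"

end

theory Submission
  imports Defs
begin

context cring
begin

lemma ideal_chain_Union:
  assumes "C \<noteq> {}" and ideals: "\<And>J. J \<in> C \<Longrightarrow> ideal J R"
    and chain: "\<And>J K. J \<in> C \<Longrightarrow> K \<in> C \<Longrightarrow> J \<subseteq> K \<or> K \<subseteq> J"
  shows "ideal (\<Union>C) R"
proof (rule idealI)
  show "subgroup (\<Union>C) (add_monoid R)"
  proof (rule add.subgroupI)
    show "\<Union>C \<subseteq> carrier R" using ideal.Icarr[OF ideals] by blast
    obtain J where "J \<in> C" using assms(1) by blast
    then have "\<zero> \<in> J" using ideal.axioms(1)[OF ideals] additive_subgroup.zero_closed by blast
    then show "\<Union>C \<noteq> {}" using \<open>J \<in> C\<close> by blast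
  next
    fix a assume "a \<in> \<Union>C"
    then obtain J where J: "J \<in> C" "a \<in> J" by blast
    then have "\<ominus> a \<in> J" using additive_subgroup.a_inv_closed[OF ideal.axioms(1)[OF ideals[OF J(1)]] J(2)] by simp
    then show "\<ominus> a \<in> \<Union>C" using \<open>J \<in> C\<close> by blast
  next
    fix a b assume "a \<in> \<Union>C" "b \<in> \<Union>C"
    then obtain J K where JK: "J \<in> C" "K \<in> C" "a \<in> J" "b \<in> K" by blast
    have "a \<oplus> b \<in> J" if "K \<subseteq> J"
      using JK that by (intro additive_subgroup.a_closed[OF ideal.axioms(1)[OF ideals[OF JK(1)]]]) auto
    moreover have "a \<oplus> b \<in> K" if "J \<subseteq> K"
      using JK that by (intro additive_subgroup.a_closed[OF ideal.axioms(1)[OF ideals[OF JK(2)]]]) auto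
    ultimately show "a \<oplus> b \<in> \<Union>C" using chain[OF JK(1,2)] JK(1,2) by blast
  qed
next
  fix a x assume "a \<in> \<Union>C" "x \<in> carrier R"
  then obtain J where "J \<in> C" "a \<in> J" by blast
  then show "x \<otimes> a \<in> \<Union>C" "a \<otimes> x \<in> \<Union>C"
    using ideal.I_l_closed[OF ideals] ideal.I_r_closed[OF ideals] \<open>x \<in> carrier R\<close> by blast+
qed (rule ring_axioms)

lemma ideal_maximal_disjoint_exists:
  assumes "ideal I R" "I \<inter> T = {}"
  obtains Q where "ideal Q R" "I \<subseteq> Q" "Q \<inter> T = {}"
    "\<And>J. ideal J R \<Longrightarrow> Q \<subseteq> J \<Longrightarrow> J \<inter> T = {} \<Longrightarrow> J = Q"
proof -
  let ?A = "{Q. ideal Q R \<and> I \<subseteq> Q \<and> Q \<inter> T = {}}"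
  have "\<exists>Q\<in>?A. \<forall>J\<in>?A. Q \<subseteq> J \<longrightarrow> J = Q"
  proof (rule subset_Zorn_nonempty)
    show "?A \<noteq> {}" using assms by auto
  next
    fix C assume C: "C \<noteq> {}" "subset.chain ?A C"
    then have "ideal (\<Union>C) R"
      by (intro ideal_chain_Union) (auto simp: subset_chain_def)
    then show "\<Union>C \<in> ?A" using C by (auto simp: subset_chain_def)
  qed
  then obtain Q where Q: "ideal Q R" "I \<subseteq> Q" "Q \<inter> T = {}"
    and max: "\<forall>J\<in>?A. Q \<subseteq> J \<longrightarrow> J = Q" by blast
  show ?thesis
  proof (rule that[OF Q])
    fix J assume "ideal J R" "Q \<subseteq> J" "J \<inter> T = {}"
    then show "J = Q" using max Q(2) by blast
  qed
qed

lemma exists_maximalideal_superset: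
  assumes "ideal I R" "\<one> \<notin> I"
  obtains M where "maximalideal M R" "I \<subseteq> M"
proof -
  obtain M where M: "ideal M R" "I \<subseteq> M" "M \<inter> {\<one>} = {}"
    and max: "\<And>J. ideal J R \<Longrightarrow> M \<subseteq> J \<Longrightarrow> J \<inter> {\<one>} = {} \<Longrightarrow> J = M"
    using ideal_maximal_disjoint_exists[of I "{\<one>}"] assms by blast
  have "maximalideal M R"
  proof (rule maximalidealI)
    show "carrier R \<noteq> M" using M(3) by auto
    fix J assume "ideal J R" "M \<subseteq> J" "J \<subseteq> carrier R"
    then show "J = M \<or> J = carrier R"
      using max ideal.one_imp_carrier by blast
  qed (fact M(1))
  then show ?thesis using that M(2) by blast
qed

lemma ideal_subset_set_add:
  assumes "ideal I R" "ideal J R"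
  shows "I \<subseteq> I <+>\<^bsub>R\<^esub> J" "J \<subseteq> I <+>\<^bsub>R\<^esub> J"
proof -
  have zero: "\<zero> \<in> I" "\<zero> \<in> J"
    using additive_subgroup.zero_closed[OF ideal.axioms(1)[OF assms(1)]]
      additive_subgroup.zero_closed[OF ideal.axioms(1)[OF assms(2)]] by blast+
  show "I \<subseteq> I <+>\<^bsub>R\<^esub> J"
  proof
    fix x assume "x \<in> I"
    then have "x \<oplus> \<zero> \<in> I <+>\<^bsub>R\<^esub> J" using zero unfolding set_add_def' by blast
    then show "x \<in> I <+>\<^bsub>R\<^esub> J" using ideal.Icarr[OF assms(1) \<open>x \<in> I\<close>] by simp
  qed
  show "J \<subseteq> I <+>\<^bsub>R\<^esub> J"
  proof
    fix y assume "y \<in> J"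
    then have "\<zero> \<oplus> y \<in> I <+>\<^bsub>R\<^esub> J" using zero unfolding set_add_def' by blast
    then show "y \<in> I <+>\<^bsub>R\<^esub> J" using ideal.Icarr[OF assms(2) \<open>y \<in> J\<close>] by simp
  qed
qed

lemma exists_primeideal_disjoint:
  assumes "ideal I R" "I \<inter> T = {}" "\<one> \<in> T"
    and mult: "\<And>a b. a \<in> T \<Longrightarrow> b \<in> T \<Longrightarrow> a \<otimes> b \<in> T"
  obtains Q where "primeideal Q R" "I \<subseteq> Q" "Q \<inter> T = {}"
proof -
  obtain Q where Q: "ideal Q R" "I \<subseteq> Q" "Q \<inter> T = {}"
    and max: "\<And>J. ideal J R \<Longrightarrow> Q \<subseteq> J \<Longrightarrow> J \<inter> T = {} \<Longrightarrow> J = Q"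
    using ideal_maximal_disjoint_exists[OF assms(1,2)] by blast
  interpret Q: ideal Q R by (fact Q(1))
  have meets: "\<exists>q\<in>Q. \<exists>r\<in>carrier R. q \<oplus> r \<otimes> a \<in> T" if "a \<in> carrier R" "a \<notin> Q" for a
  proof -
    let ?J = "Q <+>\<^bsub>R\<^esub> PIdl a"
    have J: "ideal ?J R" using add_ideals[OF Q(1) cgenideal_ideal[OF \<open>a \<in> carrier R\<close>]] .
    have "Q \<subseteq> ?J" "a \<in> ?J"
      using ideal_subset_set_add[OF Q(1) cgenideal_ideal[OF that(1)]] cgenideal_self[OF that(1)] by auto
    then have "?J \<inter> T \<noteq> {}" using max[OF J] \<open>a \<notin> Q\<close> by blast
    then show ?thesis unfolding set_add_def' cgenideal_def by blast
  qed
  have "primeideal Q R"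
  proof (rule primeidealI[OF Q(1) is_cring])
    show "carrier R \<noteq> Q" using Q(3) \<open>\<one> \<in> T\<close> by blast
    fix a b assume ab: "a \<in> carrier R" "b \<in> carrier R" "a \<otimes> b \<in> Q"
    show "a \<in> Q \<or> b \<in> Q"
    proof (rule ccontr)
      assume "\<not> (a \<in> Q \<or> b \<in> Q)"
      then obtain q r q' r' where qr: "q \<in> Q" "r \<in> carrier R" "q \<oplus> r \<otimes> a \<in> T"
        "q' \<in> Q" "r' \<in> carrier R" "q' \<oplus> r' \<otimes> b \<in> T"
        using meets ab by meson
      have qc: "q \<in> carrier R" "q' \<in> carrier R" using qr by auto
      have "(q \<oplus> r \<otimes> a) \<otimes> (q' \<oplus> r' \<otimes> b) = q \<otimes> (q' \<oplus> r' \<otimes> b) \<oplus> (r \<otimes> a \<otimes> q' \<oplus> (r \<otimes> r') \<otimes> (a \<otimes> b))"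
        using qc qr ab by algebra
      also have "\<dots> \<in> Q"
      proof (rule Q.a_closed)
        show "q \<otimes> (q' \<oplus> r' \<otimes> b) \<in> Q" using qr ab by (simp add: Q.I_r_closed)
        have "r \<otimes> a \<otimes> q' \<in> Q" using qr ab by (simp add: Q.I_l_closed)
        moreover have "(r \<otimes> r') \<otimes> (a \<otimes> b) \<in> Q" using qr ab by (simp add: Q.I_l_closed)
        ultimately show "r \<otimes> a \<otimes> q' \<oplus> (r \<otimes> r') \<otimes> (a \<otimes> b) \<in> Q" by (rule Q.a_closed)
      qed
      finally show False using mult[OF qr(3,6)] Q(3) by blast
    qed
  qed
  then show ?thesis using that Q(2,3) by blast
qed

lemma primeideal_one_notin:
  assumes "primeideal P R" shows "\<one> \<notin> P"
proof
  assume "\<one> \<in> P"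
  then have "P = carrier R" using ideal.one_imp_carrier[OF primeideal.axioms(1)[OF assms]] by blast
  then show False using primeideal.I_notcarr[OF assms] by simp
qed

lemma primeideal_mult_notin:
  "\<lbrakk>primeideal P R; a \<in> carrier R; b \<in> carrier R; a \<notin> P; b \<notin> P\<rbrakk> \<Longrightarrow> a \<otimes> b \<notin> P"
  using primeideal.I_prime[of P R a b] by blast

lemma primeideal_nat_pow_mem:
  assumes "primeideal P R" "x \<in> carrier R" "x [^] (k::nat) \<in> P"
  shows "x \<in> P"
  using assms(3)
proof (induction k)
  case 0
  then show ?case using primeideal_one_notin[OF assms(1)] by simp
next
  case (Suc k)
  then have "x [^] k \<in> P \<or> x \<in> P"
    using primeideal.I_prime[OF assms(1), of "x [^] k" x] assms(2) by simp
  then show ?case using Suc.IH by blast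
qed

lemma comaximal_nat_pow:
  assumes ab: "a \<in> carrier R" "b \<in> carrier R"
    and xy: "x \<in> carrier R" "y \<in> carrier R" "a \<otimes> x \<oplus> b \<otimes> y = \<one>"
  shows "\<exists>x'\<in>carrier R. \<exists>y'\<in>carrier R. a [^] (n::nat) \<otimes> x' \<oplus> b \<otimes> y' = \<one>"
proof (induction n)
  case 0
  have "a [^] (0::nat) \<otimes> \<one> \<oplus> b \<otimes> \<zero> = \<one>" using ab by simp
  then show ?case by blast
next
  case (Suc n)
  then obtain x' y' where x'y': "x' \<in> carrier R" "y' \<in> carrier R" "a [^] n \<otimes> x' \<oplus> b \<otimes> y' = \<one>"
    by blast
  obtain c where c: "c \<in> carrier R" "a [^] n = c" using nat_pow_closed[OF ab(1)] by blast
  have "a [^] Suc n \<otimes> (x' \<otimes> x) \<oplus> b \<otimes> (a [^] n \<otimes> x' \<otimes> y \<oplus> y')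
      = (a [^] n \<otimes> x') \<otimes> (a \<otimes> x \<oplus> b \<otimes> y) \<oplus> b \<otimes> y'"
    unfolding nat_pow_Suc c(2) using ab xy(1,2) x'y'(1,2) c(1) by algebra
  also have "\<dots> = \<one>" using xy(3) x'y' ab by simp
  finally have "a [^] Suc n \<otimes> (x' \<otimes> x) \<oplus> b \<otimes> (a [^] n \<otimes> x' \<otimes> y \<oplus> y') = \<one>" .
  moreover have "x' \<otimes> x \<in> carrier R" "a [^] n \<otimes> x' \<otimes> y \<oplus> y' \<in> carrier R"
    using ab xy x'y' by simp_all
  ultimately show ?case by blast
qed

lemma idempotent_of_comaximal_nilpotent:
  assumes uv: "u \<in> carrier R" "v \<in> carrier R" "u \<oplus> v = \<one>"
    and nil: "(u \<otimes> v) [^] (N::nat) = \<zero>"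
  obtains e where "e \<in> carrier R" "e \<otimes> e = e" "e \<in> PIdl u" "\<one> \<ominus> e \<in> PIdl v"
proof -
  let ?n = "Suc N"
  have un: "u [^] ?n \<in> carrier R" and vn: "v [^] ?n \<in> carrier R" using uv by simp_all
  have "u \<otimes> \<one> \<oplus> v \<otimes> \<one> = \<one>" using uv by simp
  then obtain x y where xy: "x \<in> carrier R" "y \<in> carrier R" "u [^] ?n \<otimes> x \<oplus> v \<otimes> y = \<one>"
    using comaximal_nat_pow[OF uv(1,2) one_closed one_closed] by blast
  then have "v \<otimes> y \<oplus> u [^] ?n \<otimes> x = \<one>" using uv un by (simp add: a_comm)
  then obtain \<beta> \<alpha> where \<alpha>\<beta>: "\<beta> \<in> carrier R" "\<alpha> \<in> carrier R" "v [^] ?n \<otimes> \<beta> \<oplus> u [^] ?n \<otimes> \<alpha> = \<one>"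
    using comaximal_nat_pow[OF uv(2) un xy(2,1)] by blast
  define e where "e = u [^] ?n \<otimes> \<alpha>"
  have e: "e \<in> carrier R" unfolding e_def using un \<alpha>\<beta> by simp
  have "\<one> \<ominus> e = (v [^] ?n \<otimes> \<beta> \<oplus> e) \<ominus> e" using \<alpha>\<beta>(3) unfolding e_def by simp
  also have "\<dots> = v [^] ?n \<otimes> \<beta>" using e vn \<alpha>\<beta>(1) by algebra
  finally have one_minus_e: "\<one> \<ominus> e = v [^] ?n \<otimes> \<beta>" .
  have "e \<ominus> e \<otimes> e = e \<otimes> (\<one> \<ominus> e)" using e by algebra
  also have "\<dots> = (u [^] ?n \<otimes> v [^] ?n) \<otimes> (\<alpha> \<otimes> \<beta>)"
    unfolding one_minus_e unfolding e_def using un vn \<alpha>\<beta> by (simp add: m_ac)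
  also have "u [^] ?n \<otimes> v [^] ?n = \<zero>"
    using nil pow_mult_distrib[OF m_comm[OF uv(1,2)] uv(1,2), of ?n] uv by simp
  finally have "e \<ominus> e \<otimes> e = \<zero>" using \<alpha>\<beta> by simp
  then have "e \<otimes> e = e" using e by simp
  moreover have "e = (u [^] N \<otimes> \<alpha>) \<otimes> u" "\<one> \<ominus> e = (v [^] N \<otimes> \<beta>) \<otimes> v"
    unfolding one_minus_e unfolding e_def using uv \<alpha>\<beta> by (simp_all add: m_ac)
  moreover have "u [^] N \<otimes> \<alpha> \<in> carrier R" "v [^] N \<otimes> \<beta> \<in> carrier R" using uv \<alpha>\<beta> by simp_all
  ultimately show ?thesis using that e unfolding cgenideal_def by blast
qed

end

definition pow_annihilator :: "('a, 'c) ring_scheme \<Rightarrow> 'a set \<Rightarrow> 'a set" where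
  "pow_annihilator R S = {v \<in> carrier R. \<exists>k::nat. \<forall>s\<in>S. v \<otimes>\<^bsub>R\<^esub> s [^]\<^bsub>R\<^esub> k = \<zero>\<^bsub>R\<^esub>}"


context cring
begin

lemma pow_annihilator_empty [simp]: "pow_annihilator R {} = carrier R"
  by (simp add: pow_annihilator_def)

lemma pow_annihilator_mult:
  assumes "u \<in> pow_annihilator R A" "v \<in> pow_annihilator R B" "A \<subseteq> carrier R" "B \<subseteq> carrier R"
  shows "u \<otimes> v \<in> pow_annihilator R (A \<union> B)"
proof -
  obtain k l where u: "u \<in> carrier R" "\<forall>s\<in>A. u \<otimes> s [^] (k::nat) = \<zero>"
    and v: "v \<in> carrier R" "\<forall>s\<in>B. v \<otimes> s [^] (l::nat) = \<zero>"
    using assms(1,2) unfolding pow_annihilator_def by blast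
  have "(u \<otimes> v) \<otimes> s [^] (k + l) = \<zero>" if "s \<in> A \<union> B" for s
  proof -
    have s: "s \<in> carrier R" using that assms(3,4) by blast
    have "(u \<otimes> v) \<otimes> s [^] (k + l) = (u \<otimes> s [^] k) \<otimes> (v \<otimes> s [^] l)"
      using u(1) v(1) s by (simp add: nat_pow_mult[symmetric] m_ac)
    then show ?thesis using that u v s by auto
  qed
  then show ?thesis using u(1) v(1) unfolding pow_annihilator_def by blast
qed

lemma pow_annihilator_ideal:
  assumes "S \<subseteq> carrier R"
  shows "ideal (pow_annihilator R S) R"
proof (rule idealI)
  show "subgroup (pow_annihilator R S) (add_monoid R)"
  proof (rule add.subgroupI)
    show "pow_annihilator R S \<subseteq> carrier R" unfolding pow_annihilator_def by blast
    have "\<zero> \<in> pow_annihilator R S"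
      unfolding pow_annihilator_def by (auto intro!: exI[of _ "0::nat"])
    then show "pow_annihilator R S \<noteq> {}" by blast
  next
    fix x assume "x \<in> pow_annihilator R S"
    then obtain k where x: "x \<in> carrier R" "\<forall>s\<in>S. x \<otimes> s [^] (k::nat) = \<zero>"
      unfolding pow_annihilator_def by blast
    have "\<ominus> x \<otimes> s [^] k = \<zero>" if "s \<in> S" for s
      using x that assms l_minus[OF x(1), of "s [^] k"] by auto
    then show "\<ominus> x \<in> pow_annihilator R S"
      using x(1) unfolding pow_annihilator_def by blast
  next
    fix x y assume "x \<in> pow_annihilator R S" "y \<in> pow_annihilator R S"
    then obtain k l where x: "x \<in> carrier R" "\<forall>s\<in>S. x \<otimes> s [^] (k::nat) = \<zero>"
      and y: "y \<in> carrier R" "\<forall>s\<in>S. y \<otimes> s [^] (l::nat) = \<zero>"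
      unfolding pow_annihilator_def by blast
    have "(x \<oplus> y) \<otimes> s [^] (k + l) = \<zero>" if "s \<in> S" for s
    proof -
      have s: "s [^] k \<in> carrier R" "s [^] l \<in> carrier R" using that assms by auto
      have "(x \<oplus> y) \<otimes> s [^] (k + l) = (x \<oplus> y) \<otimes> (s [^] k \<otimes> s [^] l)"
        using that assms by (auto simp: nat_pow_mult)
      also have "\<dots> = (x \<otimes> s [^] k) \<otimes> s [^] l \<oplus> (y \<otimes> s [^] l) \<otimes> s [^] k"
        using x(1) y(1) s by algebra
      finally have "(x \<oplus> y) \<otimes> s [^] (k + l) = (x \<otimes> s [^] k) \<otimes> s [^] l \<oplus> (y \<otimes> s [^] l) \<otimes> s [^] k" .
      then show ?thesis using x y s that by simp
    qed
    then show "x \<oplus> y \<in> pow_annihilator R S"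
      using x(1) y(1) unfolding pow_annihilator_def by blast
  qed
next
  fix a x assume "a \<in> pow_annihilator R S" "x \<in> carrier R"
  then have "x \<otimes> a \<in> pow_annihilator R S"
    using pow_annihilator_mult[of x "{}" a S] assms by simp
  moreover have "a \<in> carrier R" using \<open>a \<in> pow_annihilator R S\<close> unfolding pow_annihilator_def by blast
  ultimately show "x \<otimes> a \<in> pow_annihilator R S" "a \<otimes> x \<in> pow_annihilator R S"
    using \<open>x \<in> carrier R\<close> m_comm by simp_all
qed (rule ring_axioms)

lemma pow_annihilator_subset_primeideal:
  assumes "primeideal P R" "s \<in> S" "s \<in> carrier R" "s \<notin> P"
  shows "pow_annihilator R S \<subseteq> P"
proof
  fix v assume "v \<in> pow_annihilator R S"
  then obtain k where v: "v \<in> carrier R" "v \<otimes> s [^] (k::nat) = \<zero>"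
    using assms(2) unfolding pow_annihilator_def by blast
  then have "v \<otimes> s [^] k \<in> P"
    using additive_subgroup.zero_closed[OF ideal.axioms(1)[OF primeideal.axioms(1)[OF assms(1)]]] by simp
  then have "v \<in> P \<or> s [^] k \<in> P"
    using primeideal.I_prime[OF assms(1) v(1)] assms(3) by simp
  then show "v \<in> P" using primeideal_nat_pow_mem[OF assms(1,3)] assms(4) by blast
qed

lemma pow_annihilator_not_subset:
  assumes Q: "primeideal Q R" and "finite S" "S \<subseteq> carrier R"
    and below: "\<And>s Q'. s \<in> S \<Longrightarrow> primeideal Q' R \<Longrightarrow> Q' \<subseteq> Q \<Longrightarrow> s \<in> Q'"
  shows "\<not> pow_annihilator R S \<subseteq> Q"
  using assms(2-4)
proof (induction S rule: finite_induct)
  case empty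
  then show ?case using primeideal_one_notin[OF Q] by auto
next
  case (insert p S)
  have p: "p \<in> carrier R" and S: "S \<subseteq> carrier R" using insert.prems(1) by auto
  have "\<not> pow_annihilator R S \<subseteq> Q"
    by (rule insert.IH[OF S]) (use insert.prems(2) in blast)
  then obtain v where v: "v \<in> pow_annihilator R S" "v \<notin> Q" by blast
  have "\<exists>u\<in>carrier R - Q. \<exists>k::nat. u \<otimes> p [^] k = \<zero>"
  proof (rule ccontr)
    assume no_zero: "\<not> ?thesis"
    define T where "T = {u \<otimes> p [^] (k::nat) | u k. u \<in> carrier R - Q}"
    \<comment> \<open>a prime disjoint from the multiplicative set T lies in Q and contains no power of p\<close>
    have disj: "{\<zero>} \<inter> T = {}"
    proof (rule ccontr)
      assume "{\<zero>} \<inter> T \<noteq> {}"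
      then obtain u k where "u \<otimes> p [^] (k::nat) = \<zero>" "u \<in> carrier R - Q"
        unfolding T_def by auto
      then show False using no_zero by blast
    qed
    have one: "\<one> \<in> T" unfolding T_def using primeideal_one_notin[OF Q]
      by (auto intro!: exI[of _ \<one>] exI[of _ "0::nat"])
    have mult: "a \<otimes> b \<in> T" if ab: "a \<in> T" "b \<in> T" for a b
    proof -
      obtain u k u' k' where uk: "a = u \<otimes> p [^] (k::nat)" "u \<in> carrier R - Q"
        "b = u' \<otimes> p [^] (k'::nat)" "u' \<in> carrier R - Q"
        using ab unfolding T_def by blast
      then have "a \<otimes> b = (u \<otimes> u') \<otimes> p [^] (k + k')"
        using p by (simp add: nat_pow_mult[symmetric] m_ac)
      moreover have "u \<otimes> u' \<in> carrier R - Q" using uk primeideal_mult_notin[OF Q] by simp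
      ultimately show ?thesis unfolding T_def by blast
    qed
    obtain Q' where Q': "primeideal Q' R" "Q' \<inter> T = {}"
      using exists_primeideal_disjoint[OF zeroideal disj one mult] by blast
    have "Q' \<subseteq> Q"
    proof
      fix x assume "x \<in> Q'"
      then have "x \<in> carrier R" using ideal.Icarr[OF primeideal.axioms(1)[OF Q'(1)]] by blast
      then have "x \<notin> Q \<Longrightarrow> x \<otimes> p [^] (0::nat) \<in> T" unfolding T_def by blast
      then show "x \<in> Q" using \<open>x \<in> carrier R\<close> \<open>x \<in> Q'\<close> Q'(2) by auto
    qed
    then have "p \<in> Q'" using insert.prems(2) Q'(1) by blast
    moreover have "\<one> \<otimes> p [^] (1::nat) \<in> T"
      unfolding T_def using primeideal_one_notin[OF Q] by blast
    ultimately show False using Q'(2) p by auto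
  qed
  then obtain u where u: "u \<in> pow_annihilator R {p}" "u \<notin> Q"
    unfolding pow_annihilator_def by auto
  have "u \<otimes> v \<in> pow_annihilator R (insert p S)"
    using pow_annihilator_mult[OF u(1) v(1)] p S by simp
  moreover have "u \<otimes> v \<notin> Q"
    using primeideal_mult_notin[OF Q _ _ u(2) v(2)] u(1) v(1) unfolding pow_annihilator_def by blast
  ultimately show ?case by blast
qed

lemma nilpotent_if_mem_all_primeideals:
  assumes "p \<in> carrier R" and mem: "\<And>Q. primeideal Q R \<Longrightarrow> p \<in> Q"
  obtains k :: nat where "p [^] k = \<zero>"
proof -
  have "\<one> \<in> pow_annihilator R {p}"
  proof (rule ccontr)
    assume "\<one> \<notin> pow_annihilator R {p}"
    then obtain M where M: "maximalideal M R" "pow_annihilator R {p} \<subseteq> M"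
      using exists_maximalideal_superset[OF pow_annihilator_ideal] assms(1) by blast
    show False
      using pow_annihilator_not_subset[OF maximalideal_prime[OF M(1)]] M(2) mem assms(1) by auto
  qed
  then show ?thesis using that assms(1) unfolding pow_annihilator_def by auto
qed

lemma loc_rel_refl:
  assumes "x \<in> carrier R" "s \<in> S" "S \<subseteq> carrier R"
  shows "((x, s), (x, s)) \<in> loc_rel R S"
proof -
  have "s \<otimes> (x \<otimes> s \<ominus> x \<otimes> s) = \<zero>" using assms by (auto simp: a_minus_def r_neg)
  then show ?thesis unfolding loc_rel_def using assms by blast
qed

lemma loc_rel_prime_mem:
  assumes rel: "((x, s), (y, t)) \<in> loc_rel R S"
    and "S \<subseteq> carrier R" and Q: "primeideal Q R" "S \<inter> Q = {}" and "x \<in> Q"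
  shows "y \<in> Q"
proof -
  interpret Q: primeideal Q R by (fact Q(1))
  obtain u where u: "u \<in> S" "u \<otimes> (x \<otimes> t \<ominus> y \<otimes> s) = \<zero>"
    and c: "x \<in> carrier R" "y \<in> carrier R" "s \<in> S" "t \<in> S"
    using rel unfolding loc_rel_def by blast
  have S: "u \<in> carrier R" "s \<in> carrier R" "t \<in> carrier R" "u \<notin> Q" "s \<notin> Q"
    using u(1) c(3,4) Q(2) \<open>S \<subseteq> carrier R\<close> by auto
  have "u \<otimes> (x \<otimes> t \<ominus> y \<otimes> s) \<in> Q" using u(2) Q.zero_closed by simp
  moreover have "x \<otimes> t \<ominus> y \<otimes> s \<in> carrier R" using S c by simp
  ultimately have diff: "x \<otimes> t \<ominus> y \<otimes> s \<in> Q" using Q.I_prime[OF S(1)] S(4) by blast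
  have "y \<otimes> s = x \<otimes> t \<ominus> (x \<otimes> t \<ominus> y \<otimes> s)" using c S by algebra
  also have "\<dots> \<in> Q" using diff \<open>x \<in> Q\<close> S(3) by (simp add: Q.I_r_closed a_minus_def)
  finally show "y \<in> Q" using Q.I_prime[OF c(2) S(2)] S(5) by blast
qed

lemma localization_mult_prime_mem:
  assumes S: "S \<subseteq> carrier R" "\<one> \<in> S" and Q: "primeideal Q R" "S \<inter> Q = {}"
    and "a \<in> Q" "b \<in> carrier R" "V \<in> carrier (localization R S)"
    and eq: "loc_class R S (b, \<one>) = loc_class R S (a, \<one>) \<otimes>\<^bsub>localization R S\<^esub> V"
  shows "b \<in> Q"
proof -
  let ?U = "loc_class R S (a, \<one>)"
  have "a \<in> carrier R" using \<open>a \<in> Q\<close> ideal.Icarr[OF primeideal.axioms(1)[OF Q(1)]] by blast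
  then have "(a, \<one>) \<in> ?U" unfolding loc_class_def using loc_rel_refl S by simp
  then have "(SOME p. p \<in> ?U) \<in> ?U" by (rule someI)
  then obtain a' s' where a': "(SOME p. p \<in> ?U) = (a', s')" "((a, \<one>), (a', s')) \<in> loc_rel R S"
    unfolding loc_class_def by (metis Image_singleton_iff surj_pair)
  obtain x0 where x0: "x0 \<in> carrier R \<times> S" "V = loc_rel R S `` {x0}"
    using \<open>V \<in> carrier (localization R S)\<close> unfolding localization_def by (auto elim: quotientE)
  then have "x0 \<in> V" using loc_rel_refl S(1) by (cases x0) auto
  then have "(SOME q. q \<in> V) \<in> V" by (rule someI)
  then obtain c t where c: "(SOME q. q \<in> V) = (c, t)" "(x0, (c, t)) \<in> loc_rel R S"
    using x0(2) by (metis Image_singleton_iff surj_pair)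
  have "a' \<in> Q" using loc_rel_prime_mem[OF a'(2) S(1) Q \<open>a \<in> Q\<close>] .
  moreover have "c \<in> carrier R" using c(2) unfolding loc_rel_def by blast
  ultimately have "a' \<otimes> c \<in> Q" using ideal.I_r_closed[OF primeideal.axioms(1)[OF Q(1)]] by blast
  have "loc_class R S (b, \<one>) = loc_class R S (a' \<otimes> c, s' \<otimes> t)"
    using eq a'(1) c(1) by (simp add: localization_def Let_def)
  moreover have "(b, \<one>) \<in> loc_class R S (b, \<one>)"
    unfolding loc_class_def using loc_rel_refl \<open>b \<in> carrier R\<close> S by simp
  ultimately have "((a' \<otimes> c, s' \<otimes> t), (b, \<one>)) \<in> loc_rel R S" unfolding loc_class_def by simp
  then show "b \<in> Q" using loc_rel_prime_mem S(1) Q \<open>a' \<otimes> c \<in> Q\<close> by blast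
qed

lemma arithmetic_primeideals_below_maximal_chain:
  assumes ar: "arithmetic R" and M: "maximalideal M R"
    and Q: "primeideal Q R" "Q \<subseteq> M" and Q': "primeideal Q' R" "Q' \<subseteq> M"
  shows "Q \<subseteq> Q' \<or> Q' \<subseteq> Q"
proof (rule ccontr)
  assume "\<not> ?thesis"
  then obtain a b where ab: "a \<in> Q" "a \<notin> Q'" "b \<in> Q'" "b \<notin> Q" by blast
  let ?S = "carrier R - M" and ?L = "localization R (carrier R - M)"
  let ?frac = "\<lambda>x. loc_class R ?S (x, \<one>)"
  have S: "?S \<subseteq> carrier R" "\<one> \<in> ?S"
    using primeideal_one_notin[OF maximalideal_prime[OF M]] by auto
  have c: "a \<in> carrier R" "b \<in> carrier R"
    using ab ideal.Icarr[OF primeideal.axioms(1)[OF Q(1)]] ideal.Icarr[OF primeideal.axioms(1)[OF Q'(1)]] by auto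
  have frac: "?frac x \<in> carrier ?L" if "x \<in> carrier R" for x
    using that S unfolding loc_class_def localization_def by (auto intro: quotientI)
  have "valuation_ring ?L" using ar M unfolding arithmetic_def by blast
  then have "(\<exists>V\<in>carrier ?L. ?frac b = ?frac a \<otimes>\<^bsub>?L\<^esub> V) \<or> (\<exists>V\<in>carrier ?L. ?frac a = ?frac b \<otimes>\<^bsub>?L\<^esub> V)"
    using frac c unfolding valuation_ring_def by blast
  then show False
    using localization_mult_prime_mem[OF S Q(1)] localization_mult_prime_mem[OF S Q'(1)] ab c Q(2) Q'(2)
    by blast
qed

lemma arithmetic_least_primeideal_below_maximal:
  assumes ar: "arithmetic R" and M: "maximalideal M R"
  shows "\<exists>P\<in>Minspec R. P \<subseteq> M \<and> (\<forall>Q. primeideal Q R \<and> Q \<subseteq> M \<longrightarrow> P \<subseteq> Q)"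
proof -
  let ?C = "{Q. primeideal Q R \<and> Q \<subseteq> M}"
  let ?P = "\<Inter>?C"
  have MP: "primeideal M R" using maximalideal_prime[OF M] .
  have least: "?P \<subseteq> Q" if "primeideal Q R" "Q \<subseteq> M" for Q using that by blast
  have "ideal ?P R"
    using MP by (intro i_Intersect) (auto intro: primeideal.axioms(1))
  then have "primeideal ?P R"
  proof (rule primeidealI[OF _ is_cring])
    show "carrier R \<noteq> ?P" using primeideal_one_notin[OF MP] least[OF MP] one_closed by blast
    fix a b assume ab: "a \<in> carrier R" "b \<in> carrier R" "a \<otimes> b \<in> ?P"
    show "a \<in> ?P \<or> b \<in> ?P"
    proof (rule ccontr)
      assume "\<not> ?thesis"
      then obtain Qa Qb where Q: "Qa \<in> ?C" "a \<notin> Qa" "Qb \<in> ?C" "b \<notin> Qb" by blast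
      then have "Qa \<subseteq> Qb \<or> Qb \<subseteq> Qa"
        using arithmetic_primeideals_below_maximal_chain[OF ar M] by blast
      then show False
        using Q ab primeideal.I_prime[of Qa R a b] primeideal.I_prime[of Qb R a b] by blast
    qed
  qed
  moreover have "?P \<in> Minspec R"
    unfolding Minspec_def using calculation least[OF MP] by blast
  then show ?thesis using least[OF MP] least by blast
qed

lemma arithmetic_Minspec_below_primeideal:
  assumes "arithmetic R" "primeideal Q R"
  obtains P where "P \<in> Minspec R" "P \<subseteq> Q"
proof -
  obtain M where "maximalideal M R" "Q \<subseteq> M"
    using exists_maximalideal_superset[OF primeideal.axioms(1)[OF assms(2)] primeideal_one_notin[OF assms(2)]] .
  then obtain P where "P \<in> Minspec R" "P \<subseteq> M" "\<forall>Q. primeideal Q R \<and> Q \<subseteq> M \<longrightarrow> P \<subseteq> Q"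
    using arithmetic_least_primeideal_below_maximal[OF assms(1)] by blast
  then show ?thesis using that assms(2) \<open>Q \<subseteq> M\<close> by blast
qed

lemma arithmetic_comaximal_pow_annihilators:
  assumes ar: "arithmetic R" and p: "p \<in> carrier R" and S: "finite S" "S \<subseteq> pow_annihilator R {p}"
  obtains u v where "u \<in> pow_annihilator R {p}" "v \<in> pow_annihilator R S" "u \<oplus> v = \<one>"
proof -
  have Sc: "S \<subseteq> carrier R" using S(2) unfolding pow_annihilator_def by blast
  let ?K = "pow_annihilator R {p} <+>\<^bsub>R\<^esub> pow_annihilator R S"
  have ideals: "ideal (pow_annihilator R {p}) R" "ideal (pow_annihilator R S) R"
    using pow_annihilator_ideal p Sc by auto
  have "\<one> \<in> ?K"
  proof (rule ccontr)
    assume "\<one> \<notin> ?K"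
    then obtain M where M: "maximalideal M R" "?K \<subseteq> M"
      using exists_maximalideal_superset[OF add_ideals[OF ideals]] by blast
    have MP: "primeideal M R" using maximalideal_prime[OF M(1)] .
    obtain P where P: "P \<in> Minspec R" "P \<subseteq> M" "\<forall>Q. primeideal Q R \<and> Q \<subseteq> M \<longrightarrow> P \<subseteq> Q"
      using arithmetic_least_primeideal_below_maximal[OF ar M(1)] by blast
    have PP: "primeideal P R" using P(1) unfolding Minspec_def by blast
    show False
    proof (cases "p \<in> P")
      case True
      have "\<not> pow_annihilator R {p} \<subseteq> M"
        by (rule pow_annihilator_not_subset[OF MP]) (use p P(3) True in auto)
      then show False using M(2) ideal_subset_set_add[OF ideals] by blast
    next
      case False
      then have "S \<subseteq> P" using S(2) pow_annihilator_subset_primeideal[OF PP, of p "{p}"] p by blast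
      have "\<not> pow_annihilator R S \<subseteq> M"
        by (rule pow_annihilator_not_subset[OF MP S(1) Sc]) (use \<open>S \<subseteq> P\<close> P(3) in blast)
      then show False using M(2) ideal_subset_set_add[OF ideals] by blast
    qed
  qed
  then obtain u v where "u \<in> pow_annihilator R {p}" "v \<in> pow_annihilator R S" "\<one> = u \<oplus> v"
    unfolding set_add_def' by blast
  then show ?thesis using that by simp
qed

end

lemma Minspec_finite_subcover:
  fixes R :: "('a, 'c) ring_scheme"
  assumes comp: "compactin (zariski R) (Minspec R)"
    and B: "B \<subseteq> carrier R" "\<forall>P\<in>Minspec R. \<exists>b\<in>B. b \<notin> P"
  obtains B' where "finite B'" "B' \<subseteq> B" "\<forall>P\<in>Minspec R. \<exists>b\<in>B'. b \<notin> P"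
proof -
  define D where "D b = {P. primeideal P R \<and> b \<notin> P}" for b
  have "\<forall>U\<in>D ` B. openin (zariski R) U"
  proof
    fix U assume "U \<in> D ` B"
    then obtain b where "b \<in> carrier R" "U = D b" using B(1) by blast
    then show "openin (zariski R) U"
      unfolding zariski_def D_def by (intro topology_generated_by_Basis) auto
  qed
  moreover have "Minspec R \<subseteq> \<Union>(D ` B)"
  proof
    fix P assume "P \<in> Minspec R"
    then obtain b where "b \<in> B" "b \<notin> P" "primeideal P R" using B(2) unfolding Minspec_def by blast
    then have "P \<in> D b" unfolding D_def by simp
    then show "P \<in> \<Union>(D ` B)" using \<open>b \<in> B\<close> by blast
  qed
  moreover have "(\<forall>U\<in>D ` B. openin (zariski R) U) \<and> Minspec R \<subseteq> \<Union>(D ` B) \<longrightarrow>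
      (\<exists>F. finite F \<and> F \<subseteq> D ` B \<and> Minspec R \<subseteq> \<Union>F)"
    using conjunct2[OF comp[unfolded compactin_def]] by (rule spec)
  ultimately obtain F where F: "finite F" "F \<subseteq> D ` B" "Minspec R \<subseteq> \<Union>F" by blast
  obtain B' where B': "B' \<subseteq> B" "finite B'" "F = D ` B'"
    using finite_subset_image[OF F(1,2)] by blast
  have "\<exists>b\<in>B'. b \<notin> P" if "P \<in> Minspec R" for P
    using F(3) that unfolding B'(3) D_def by blast
  then show ?thesis using that B'(1,2) by blast
qed

context cring
begin

lemma Minspec_pow_annihilator_cover:
  assumes comp: "compactin (zariski R) (Minspec R)" and p: "p \<in> carrier R"
  obtains S where "finite S" "S \<subseteq> pow_annihilator R {p}"
    "\<forall>P\<in>Minspec R. p \<in> P \<longrightarrow> (\<exists>s\<in>S. s \<notin> P)"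
proof -
  have cover: "\<forall>P\<in>Minspec R. \<exists>b\<in>insert p (pow_annihilator R {p}). b \<notin> P"
  proof
    fix P assume P: "P \<in> Minspec R"
    show "\<exists>b\<in>insert p (pow_annihilator R {p}). b \<notin> P"
    proof (cases "p \<in> P")
      case True
      have "primeideal P R" and min: "\<forall>Q. primeideal Q R \<and> Q \<subseteq> P \<longrightarrow> Q = P"
        using P unfolding Minspec_def by blast+
      have "\<not> pow_annihilator R {p} \<subseteq> P"
        by (rule pow_annihilator_not_subset[OF \<open>primeideal P R\<close>]) (use p True min in blast)+
      then show ?thesis by blast
    qed blast
  qed
  have "insert p (pow_annihilator R {p}) \<subseteq> carrier R"
    using p unfolding pow_annihilator_def by blast
  then obtain B' where B': "finite B'" "B' \<subseteq> insert p (pow_annihilator R {p})"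
    "\<forall>P\<in>Minspec R. \<exists>b\<in>B'. b \<notin> P"
    using Minspec_finite_subcover[OF comp _ cover] by blast
  show ?thesis
  proof (rule that[of "B' - {p}"])
    show "finite (B' - {p})" "B' - {p} \<subseteq> pow_annihilator R {p}" using B'(1,2) by auto
    show "\<forall>P\<in>Minspec R. p \<in> P \<longrightarrow> (\<exists>s\<in>B' - {p}. s \<notin> P)"
      using B'(3) by blast
  qed
qed

lemma arithmetic_Minspec_separated_by_idempotent:
  assumes ar: "arithmetic R" and comp: "compactin (zariski R) (Minspec R)"
    and P0: "P0 \<in> Minspec R" and Q0: "Q0 \<in> Minspec R" and "P0 \<noteq> Q0"
  shows "\<exists>e\<in>carrier R. e \<otimes> e = e \<and> e \<in> Q0 \<and> \<one> \<ominus> e \<in> P0"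
proof -
  have P0P: "primeideal P0 R" and Q0P: "primeideal Q0 R" using P0 Q0 unfolding Minspec_def by blast+
  have "\<not> P0 \<subseteq> Q0" using Q0 P0P \<open>P0 \<noteq> Q0\<close> unfolding Minspec_def by blast
  then obtain p where p: "p \<in> P0" "p \<notin> Q0" by blast
  have pc: "p \<in> carrier R" using p(1) ideal.Icarr[OF primeideal.axioms(1)[OF P0P]] by blast
  obtain S where S: "finite S" "S \<subseteq> pow_annihilator R {p}"
    and cover: "\<forall>P\<in>Minspec R. p \<in> P \<longrightarrow> (\<exists>s\<in>S. s \<notin> P)"
    using Minspec_pow_annihilator_cover[OF comp pc] by blast
  have Sc: "S \<subseteq> carrier R" using S(2) unfolding pow_annihilator_def by blast
  obtain u v where u: "u \<in> pow_annihilator R {p}" and v: "v \<in> pow_annihilator R S" and "u \<oplus> v = \<one>"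
    using arithmetic_comaximal_pow_annihilators[OF ar pc S] by blast
  have uv: "u \<in> carrier R" "v \<in> carrier R" using u v unfolding pow_annihilator_def by blast+
  \<comment> \<open>every minimal prime contains u (if it misses p) or v (if it contains p)\<close>
  have u_mem: "u \<in> P" if "primeideal P R" "p \<notin> P" for P
    using pow_annihilator_subset_primeideal[OF that(1) _ pc that(2)] u by blast
  have v_mem: "v \<in> P" if P: "P \<in> Minspec R" "p \<in> P" for P
  proof -
    obtain s where "s \<in> S" "s \<notin> P" using cover P by blast
    then show ?thesis
      using pow_annihilator_subset_primeideal[of P s S] P(1) Sc v unfolding Minspec_def by blast
  qed
  have uv_mem: "u \<otimes> v \<in> Q" if Q: "primeideal Q R" for Q
  proof -
    obtain P where P: "P \<in> Minspec R" "P \<subseteq> Q"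
      using arithmetic_Minspec_below_primeideal[OF ar Q] by blast
    have PP: "primeideal P R" using P(1) unfolding Minspec_def by blast
    have "u \<in> P \<or> v \<in> P" using u_mem[OF PP] v_mem[OF P(1)] by blast
    then have "u \<otimes> v \<in> P"
      using ideal.I_r_closed[OF primeideal.axioms(1)[OF PP]] ideal.I_l_closed[OF primeideal.axioms(1)[OF PP]] uv
      by blast
    then show ?thesis using P(2) by blast
  qed
  obtain N where N: "(u \<otimes> v) [^] (N::nat) = \<zero>"
    using nilpotent_if_mem_all_primeideals[OF _ uv_mem] uv by blast
  obtain e where e: "e \<in> carrier R" "e \<otimes> e = e" "e \<in> PIdl u" "\<one> \<ominus> e \<in> PIdl v"
    using idempotent_of_comaximal_nilpotent[OF uv \<open>u \<oplus> v = \<one>\<close> N] by blast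
  have "PIdl u \<subseteq> Q0" using cgenideal_minimal[OF primeideal.axioms(1)[OF Q0P] u_mem[OF Q0P p(2)]] .
  moreover have "PIdl v \<subseteq> P0" using cgenideal_minimal[OF primeideal.axioms(1)[OF P0P] v_mem[OF P0 p(1)]] .
  ultimately show ?thesis using e by blast
qed

end

lemma subgroup_quot_mod_iff:
  fixes M :: "('a, 'm, 'd) module_scheme"
  shows "subgroup H (add_monoid (quot_mod R M N)) \<longleftrightarrow> subgroup H (M A_Mod N)"
proof -
  have "carrier (quot_mod R M N) = carrier (M A_Mod N)"
    unfolding A_FactGroup_def' A_RCOSETS_def' quot_mod_def by auto
  then show ?thesis unfolding subgroup_def m_inv_def by (simp add: A_FactGroup_def' quot_mod_def)
qed

lemma quot_mod_smult:
  fixes R :: "('a, 'c) ring_scheme" and M (structure)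
  assumes "module R M" "submodule N R M" "r \<in> carrier R" "x \<in> carrier M"
  shows "r \<odot>\<^bsub>quot_mod R M N\<^esub> (N +> x) = N +> (r \<odot> x)"
proof -
  interpret module R M by fact
  interpret N: submodule N R M by fact
  interpret N: abelian_subgroup N M
    by (rule abelian_subgroupI3[OF additive_subgroup.intro[OF N.subgroup_axioms] abelian_group_axioms])
  have eq: "N +> (r \<odot> y) = N +> (r \<odot> x)" if y: "y \<in> N +> x" for y
  proof -
    obtain h where h: "h \<in> N" "y = h \<oplus> x" using y unfolding a_r_coset_def' by blast
    have "h \<in> carrier M" using h(1) N.subset by auto
    then have "r \<odot> y = r \<odot> h \<oplus> r \<odot> x" using h assms(3,4) by (simp add: smult_r_distr)
    then have "r \<odot> y \<in> N +> (r \<odot> x)" unfolding a_r_coset_def' using N.smult_closed[OF assms(3) h(1)] by blast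
    then show ?thesis using N.a_repr_independence' assms(3,4) smult_closed by (metis sym)
  qed
  have "r \<odot>\<^bsub>quot_mod R M N\<^esub> (N +> x) = (\<Union>y\<in>N +> x. N +> (r \<odot> y))"
    by (simp add: quot_mod_def)
  also have "\<dots> = (\<Union>y\<in>N +> x. N +> (r \<odot> x))" using eq by (rule SUP_cong[OF refl])
  also have "\<dots> = N +> (r \<odot> x)" using N.a_rcos_self[OF assms(4)] by blast
  finally show ?thesis .
qed

lemma submodule_quot_mod_image:
  fixes R :: "('a, 'c) ring_scheme" and M (structure)
  assumes "module R M" "submodule N R M" "submodule H R M"
  shows "submodule ((\<lambda>x. N +> x) ` H) R (quot_mod R M N)"
proof -
  interpret module R M by fact
  interpret N: submodule N R M by fact
  interpret N: abelian_subgroup N M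
    by (rule abelian_subgroupI3[OF additive_subgroup.intro[OF N.subgroup_axioms] abelian_group_axioms])
  have "group_hom (add_monoid M) (M A_Mod N) (\<lambda>x. N +> x)"
    by (intro group_hom.intro group_hom_axioms.intro a_group N.a_factorgroup_is_group N.a_r_coset_hom_A_Mod)
  then have "subgroup ((\<lambda>x. N +> x) ` H) (M A_Mod N)"
    using group_hom.subgroup_img_is_subgroup submodule.axioms(1)[OF assms(3)] by blast
  moreover have "r \<odot>\<^bsub>quot_mod R M N\<^esub> U \<in> (\<lambda>x. N +> x) ` H"
    if r: "r \<in> carrier R" and U: "U \<in> (\<lambda>x. N +> x) ` H" for r U
  proof -
    obtain h where h: "h \<in> H" "U = N +> h" using U by blast
    have "h \<in> carrier M" using h(1) submodule.axioms(1)[OF assms(3)] subgroup.subset by force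
    then have "r \<odot>\<^bsub>quot_mod R M N\<^esub> U = N +> (r \<odot> h)"
      using quot_mod_smult[OF assms(1,2) r] h(2) by simp
    then show ?thesis using submodule.smult_closed[OF assms(3) r h(1)] by blast
  qed
  ultimately show ?thesis
    by (intro submodule.intro submodule_axioms.intro) (auto simp: subgroup_quot_mod_iff)
qed

lemma smult_image_submodule:
  fixes R :: "('a, 'c) ring_scheme" and M (structure)
  assumes "module R M" "c \<in> carrier R"
  shows "submodule ((\<lambda>x. c \<odot> x) ` carrier M) R M"
proof -
  interpret module R M by fact
  show ?thesis
  proof (rule submoduleI)
    show "(\<lambda>x. c \<odot> x) ` carrier M \<subseteq> carrier M" using assms(2) by auto
    show "\<zero> \<in> (\<lambda>x. c \<odot> x) ` carrier M" using assms(2) smult_r_null[of c] by force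
  next
    fix a assume "a \<in> (\<lambda>x. c \<odot> x) ` carrier M"
    then obtain x where "x \<in> carrier M" "a = c \<odot> x" by blast
    then show "\<ominus> a \<in> (\<lambda>x. c \<odot> x) ` carrier M"
      using assms(2) by (intro rev_image_eqI[of "\<ominus> x"]) (simp_all add: smult_r_minus)
  next
    fix a b assume "a \<in> (\<lambda>x. c \<odot> x) ` carrier M" "b \<in> (\<lambda>x. c \<odot> x) ` carrier M"
    then obtain x y where "x \<in> carrier M" "y \<in> carrier M" "a = c \<odot> x" "b = c \<odot> y" by blast
    then show "a \<oplus> b \<in> (\<lambda>x. c \<odot> x) ` carrier M"
      using assms(2) by (intro rev_image_eqI[of "x \<oplus> y"]) (simp_all add: smult_r_distr)
  next
    fix r a assume "r \<in> carrier R" "a \<in> (\<lambda>x. c \<odot> x) ` carrier M"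
    then obtain x where "x \<in> carrier M" "a = c \<odot> x" by blast
    then show "r \<odot> a \<in> (\<lambda>x. c \<odot> x) ` carrier M"
      using assms(2) \<open>r \<in> carrier R\<close>
      by (intro rev_image_eqI[of "r \<odot> x"]) (simp_all add: smult_assoc1[symmetric] R.m_comm)
  qed
qed

lemma indecomposable_quot_mod_idempotent:
  fixes R :: "('a, 'c) ring_scheme" and M (structure)
  assumes mod: "module R M" and N: "submodule N R M" and ind: "indecomposable R (quot_mod R M N)"
    and e: "e \<in> carrier R" "e \<otimes>\<^bsub>R\<^esub> e = e"
  shows "(\<forall>x\<in>carrier M. e \<odot> x \<in> N) \<or> (\<forall>x\<in>carrier M. (\<one>\<^bsub>R\<^esub> \<ominus>\<^bsub>R\<^esub> e) \<odot> x \<in> N)"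
proof -
  interpret module R M by (fact mod)
  interpret N: submodule N R M by (fact N)
  interpret N: abelian_subgroup N M
    by (rule abelian_subgroupI3[OF additive_subgroup.intro[OF N.subgroup_axioms] abelian_group_axioms])
  let ?F = "quot_mod R M N"
  let ?A = "\<lambda>c. (\<lambda>x. N +> x) ` ((\<lambda>x. c \<odot> x) ` carrier M)"
  define f where "f = \<one>\<^bsub>R\<^esub> \<ominus>\<^bsub>R\<^esub> e"
  have "e \<otimes>\<^bsub>R\<^esub> f = e \<ominus>\<^bsub>R\<^esub> e \<otimes>\<^bsub>R\<^esub> e" "e \<oplus>\<^bsub>R\<^esub> f = \<one>\<^bsub>R\<^esub>"
    unfolding f_def using e(1) by algebra+
  then have f: "f \<in> carrier R" "e \<otimes>\<^bsub>R\<^esub> f = \<zero>\<^bsub>R\<^esub>" "e \<oplus>\<^bsub>R\<^esub> f = \<one>\<^bsub>R\<^esub>"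
    unfolding f_def using e by simp_all
  have zero: "\<zero>\<^bsub>?F\<^esub> = N" by (simp add: quot_mod_def)
  have sub: "submodule (?A c) R ?F" if "c \<in> carrier R" for c
    using submodule_quot_mod_image[OF mod N smult_image_submodule[OF mod that]] .
  have int: "?A e \<inter> ?A f = {N}"
  proof
    show "{N} \<subseteq> ?A e \<inter> ?A f"
      using submodule.axioms(1)[OF sub[OF e(1)]] submodule.axioms(1)[OF sub[OF f(1)]]
      by (auto dest!: subgroup.one_closed simp: zero)
    show "?A e \<inter> ?A f \<subseteq> {N}"
    proof
      fix U assume "U \<in> ?A e \<inter> ?A f"
      then obtain x y where xy: "x \<in> carrier M" "y \<in> carrier M" "U = N +> (e \<odot> x)" "U = N +> (f \<odot> y)"
        by blast
      have "e \<odot> x \<in> N +> (f \<odot> y)" using N.a_rcos_self[of "e \<odot> x"] xy e(1) by simp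
      then obtain h where h: "h \<in> N" "e \<odot> x = h \<oplus> f \<odot> y" unfolding a_r_coset_def' by blast
      have hc: "h \<in> carrier M" using h(1) N.subset by auto
      have "e \<odot> x = e \<odot> (e \<odot> x)" using e xy(1) by (simp add: smult_assoc1[symmetric])
      also have "\<dots> = e \<odot> h \<oplus> e \<odot> (f \<odot> y)" using h hc e(1) f(1) xy(2) by (simp add: smult_r_distr)
      also have "e \<odot> (f \<odot> y) = \<zero>" using f(2) e(1) f(1) xy(2) by (simp add: smult_assoc1[symmetric])
      finally have "e \<odot> x = e \<odot> h" using hc e(1) by simp
      then have "e \<odot> x \<in> N" using N.smult_closed[OF e(1) h(1)] by simp
      then show "U \<in> {N}" using xy(3) N.a_rcos_const by simp
    qed
  qed
  have gen: "gen_sub R ?F (?A e \<union> ?A f) = carrier ?F"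
  proof
    show "gen_sub R ?F (?A e \<union> ?A f) \<subseteq> carrier ?F" unfolding gen_sub_def by blast
    show "carrier ?F \<subseteq> gen_sub R ?F (?A e \<union> ?A f)"
    proof
      fix U assume "U \<in> carrier ?F"
      then obtain x where x: "x \<in> carrier M" "U = N +> x" by (auto simp: quot_mod_def)
      have "e \<odot> x \<oplus> f \<odot> x = x" using x(1) e(1) f by (simp add: smult_l_distr[symmetric])
      then have U: "U = (N +> (e \<odot> x)) \<oplus>\<^bsub>?F\<^esub> (N +> (f \<odot> x))"
        using x e(1) f(1) by (simp add: N.a_rcos_sum quot_mod_def)
      have A: "N +> (e \<odot> x) \<in> ?A e" "N +> (f \<odot> x) \<in> ?A f" using x(1) by blast+
      have "U \<in> S" if S: "submodule S R ?F" "?A e \<union> ?A f \<subseteq> S" for S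
      proof -
        have "N +> (e \<odot> x) \<in> S" "N +> (f \<odot> x) \<in> S" using A S(2) by blast+
        then show ?thesis using subgroup.m_closed[OF submodule.axioms(1)[OF S(1)]] U by simp
      qed
      then show "U \<in> gen_sub R ?F (?A e \<union> ?A f)"
        unfolding gen_sub_def using \<open>U \<in> carrier ?F\<close> by blast
    qed
  qed
  have decomp: "\<forall>A B. submodule A R ?F \<and> submodule B R ?F \<and> A \<inter> B = {N} \<and>
      gen_sub R ?F (A \<union> B) = carrier ?F \<longrightarrow> A = {N} \<or> B = {N}"
    using ind unfolding indecomposable_def zero by (rule conjunct2)
  have "?A e = {N} \<or> ?A f = {N}"
    using decomp[THEN spec[of _ "?A e"], THEN spec[of _ "?A f"]] sub[OF e(1)] sub[OF f(1)] int gen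
    by argo
  moreover have "c \<odot> x \<in> N" if A: "?A c = {N}" and cx: "c \<in> carrier R" "x \<in> carrier M" for c x
  proof -
    have "N +> (c \<odot> x) \<in> ?A c" using cx(2) by blast
    then have "N +> (c \<odot> x) = N" unfolding A by simp
    then show ?thesis using N.a_rcos_self[of "c \<odot> x"] cx by simp
  qed
  ultimately show ?thesis using e(1) f(1) unfolding f_def by blast
qed

lemma has_pcs_ic_idempotent_dichotomy:
  fixes R :: "('a, 'c) ring_scheme" and M (structure)
  assumes mod: "module R M" and "has_pcs_ic R M"
  obtains Ms n where "Ms 0 = {\<zero>}" "Ms n = carrier M" "\<forall>i\<le>n. Ms i \<subseteq> carrier M"
    "\<forall>i<n. \<forall>e\<in>carrier R. e \<otimes>\<^bsub>R\<^esub> e = e \<longrightarrow>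
       (\<forall>x\<in>Ms (Suc i). e \<odot> x \<in> Ms i) \<or> (\<forall>x\<in>Ms (Suc i). (\<one>\<^bsub>R\<^esub> \<ominus>\<^bsub>R\<^esub> e) \<odot> x \<in> Ms i)"
proof -
  obtain Ms n where Ms: "Ms 0 = {\<zero>}" "Ms n = carrier M" and pure: "\<forall>i\<le>n. pure_sub R M (Ms i)"
    and steps: "\<forall>i<n. Ms i \<subset> Ms (Suc i) \<and>
        cyclic_mod R (quot_mod R (M\<lparr>carrier := Ms (Suc i)\<rparr>) (Ms i)) \<and>
        indecomposable R (quot_mod R (M\<lparr>carrier := Ms (Suc i)\<rparr>) (Ms i))"
    using \<open>has_pcs_ic R M\<close> unfolding has_pcs_ic_def by (elim exE conjE) (rule that)
  have sub: "submodule (Ms i) R M" if "i \<le> n" for i using pure that unfolding pure_sub_def by blast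
  then have carr: "\<forall>i\<le>n. Ms i \<subseteq> carrier M" using subgroup.subset[OF submodule.axioms(1)] by force
  have dich: "(\<forall>x\<in>Ms (Suc i). e \<odot> x \<in> Ms i) \<or> (\<forall>x\<in>Ms (Suc i). (\<one>\<^bsub>R\<^esub> \<ominus>\<^bsub>R\<^esub> e) \<odot> x \<in> Ms i)"
    if i: "i < n" and e: "e \<in> carrier R" "e \<otimes>\<^bsub>R\<^esub> e = e" for i e
  proof -
    let ?M' = "M\<lparr>carrier := Ms (Suc i)\<rparr>"
    have mod': "module R ?M'" using submodule.submodule_is_module[OF sub mod] i by simp
    have "module R (?M'\<lparr>carrier := Ms i\<rparr>)" using submodule.submodule_is_module[OF sub[of i] mod] i by simp
    then have "submodule (Ms i) R ?M'"
      using module.module_incl_imp_submodule[OF mod'] steps i by auto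
    from indecomposable_quot_mod_idempotent[OF mod' this _ e] steps i show ?thesis by simp
  qed
  show ?thesis by (rule that[OF Ms carr]) (use dich in blast)
qed

lemma chain_annihilated_outside_primeideal:
  fixes R :: "('a, 'c) ring_scheme" and M (structure)
  assumes mod: "module R M" and P: "primeideal P R" and carr: "\<forall>i\<le>n. Ms i \<subseteq> carrier M"
    and steps: "\<forall>i<n. \<exists>c\<in>carrier R - P. \<forall>x\<in>Ms (Suc i). c \<odot> x \<in> Ms i"
  shows "\<exists>c\<in>carrier R - P. \<forall>x\<in>Ms n. c \<odot> x \<in> Ms 0"
  using carr steps
proof (induction n)
  case 0
  interpret module R M by (fact mod)
  have "\<one>\<^bsub>R\<^esub> \<notin> P" using R.primeideal_one_notin[OF P] .
  then show ?case using "0.prems"(1) by force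
next
  case (Suc n)
  interpret module R M by (fact mod)
  have "\<exists>c\<in>carrier R - P. \<forall>x\<in>Ms n. c \<odot> x \<in> Ms 0" using Suc by simp
  then obtain c where c: "c \<in> carrier R - P" "\<forall>x\<in>Ms n. c \<odot> x \<in> Ms 0" by blast
  obtain d where d: "d \<in> carrier R - P" "\<forall>x\<in>Ms (Suc n). d \<odot> x \<in> Ms n" using Suc.prems(2) by blast
  have "c \<otimes>\<^bsub>R\<^esub> d \<notin> P" using c(1) d(1) R.primeideal_mult_notin[OF P] by blast
  moreover have "(c \<otimes>\<^bsub>R\<^esub> d) \<odot> x \<in> Ms 0" if "x \<in> Ms (Suc n)" for x
  proof -
    have "x \<in> carrier M" using that Suc.prems(1) by blast
    then have "(c \<otimes>\<^bsub>R\<^esub> d) \<odot> x = c \<odot> (d \<odot> x)" using c(1) d(1) by (simp add: smult_assoc1)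
    then show ?thesis using c(2) d(2) that by simp
  qed
  ultimately show ?case using c(1) d(1) by blast
qed

definition regular_module :: "('a, 'c) ring_scheme \<Rightarrow> 'a std_module" where
  "regular_module R =
    \<lparr> carrier = (\<lambda>a. {[a]}) ` carrier R, mult = (\<lambda>U V. U), one = {[\<one>\<^bsub>R\<^esub>]},
      ring.zero = {[\<zero>\<^bsub>R\<^esub>]},
      ring.add = (\<lambda>U V. {[hd (the_elem U) \<oplus>\<^bsub>R\<^esub> hd (the_elem V)]}),
      smult = (\<lambda>r U. {[r \<otimes>\<^bsub>R\<^esub> hd (the_elem U)]}) \<rparr>"


lemma regular_module_simps [simp]:
  "carrier (regular_module R) = (\<lambda>a. {[a]}) ` carrier R"
  "\<zero>\<^bsub>regular_module R\<^esub> = {[\<zero>\<^bsub>R\<^esub>]}"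
  "{[a]} \<oplus>\<^bsub>regular_module R\<^esub> {[b]} = {[a \<oplus>\<^bsub>R\<^esub> b]}"
  "r \<odot>\<^bsub>regular_module R\<^esub> {[b]} = {[r \<otimes>\<^bsub>R\<^esub> b]}"
  by (simp_all add: regular_module_def)

lemma (in cring) regular_module: "module R (regular_module R)"
proof -
  have elem: "\<exists>a\<in>carrier R. U = {[a]}" if "U \<in> carrier (regular_module R)" for U
    using that by auto
  show ?thesis
  proof (rule moduleI)
    show "abelian_group (regular_module R)"
    proof (rule abelian_groupI)
      fix U assume "U \<in> carrier (regular_module R)"
      then obtain a where a: "a \<in> carrier R" "U = {[a]}" using elem by blast
      then show "\<zero>\<^bsub>regular_module R\<^esub> \<oplus>\<^bsub>regular_module R\<^esub> U = U" by simp
      show "\<exists>V\<in>carrier (regular_module R). V \<oplus>\<^bsub>regular_module R\<^esub> U = \<zero>\<^bsub>regular_module R\<^esub>"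
        using a by (intro bexI[of _ "{[\<ominus> a]}"]) (auto simp: l_neg)
    qed (auto simp: a_ac dest!: elem)
  qed (auto simp: l_distr r_distr m_assoc dest!: elem intro: is_cring)
qed

lemma (in cring) regular_module_fin_gen: "fin_gen R (regular_module R)"
proof -
  have "gen_sub R (regular_module R) {{[\<one>]}} = carrier (regular_module R)"
  proof
    show "gen_sub R (regular_module R) {{[\<one>]}} \<subseteq> carrier (regular_module R)"
      unfolding gen_sub_def by blast
    show "carrier (regular_module R) \<subseteq> gen_sub R (regular_module R) {{[\<one>]}}"
    proof
      fix U assume U: "U \<in> carrier (regular_module R)"
      then obtain a where a: "a \<in> carrier R" "U = a \<odot>\<^bsub>regular_module R\<^esub> {[\<one>]}" by auto
      have "U \<in> N" if N: "submodule N R (regular_module R)" "{{[\<one>]}} \<subseteq> N" for N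
        using submodule.smult_closed[OF N(1) a(1), of "{[\<one>]}"] N(2) unfolding a(2) by blast
      then show "U \<in> gen_sub R (regular_module R) {{[\<one>]}}" unfolding gen_sub_def using U by blast
    qed
  qed
  then show ?thesis unfolding fin_gen_def by (intro exI[of _ "{{[\<one>]}}"]) auto
qed


lemma (in cring) separated_primeideals_pigeonhole:
  fixes kills :: "'a \<Rightarrow> nat \<Rightarrow> bool"
  assumes F: "finite F" "n < card F" "\<forall>P\<in>F. primeideal P R"
    and sep: "\<forall>P\<in>F. \<forall>Q\<in>F. P \<noteq> Q \<longrightarrow> (\<exists>e\<in>carrier R. e \<otimes> e = e \<and> e \<in> Q \<and> \<one> \<ominus> e \<in> P)"
    and dich: "\<forall>i<n. \<forall>e\<in>carrier R. e \<otimes> e = e \<longrightarrow> kills e i \<or> kills (\<one> \<ominus> e) i"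
  shows "\<exists>P\<in>F. \<forall>i<n. \<exists>c\<in>carrier R - P. kills c i"
proof -
  define bad where "bad i = {P\<in>F. \<not> (\<exists>c\<in>carrier R - P. kills c i)}" for i
  have unique: "P = Q" if i: "i < n" and PQ: "P \<in> bad i" "Q \<in> bad i" for i P Q
  proof (rule ccontr)
    assume "P \<noteq> Q"
    then obtain e where e: "e \<in> carrier R" "e \<otimes> e = e" "e \<in> Q" "\<one> \<ominus> e \<in> P"
      using sep PQ unfolding bad_def by blast
    have PQ_prime: "primeideal P R" "primeideal Q R" using F(3) PQ unfolding bad_def by blast+
    have sum: "e \<oplus> (\<one> \<ominus> e) = \<one>" using e(1) by algebra
    have "e \<notin> P" "\<one> \<ominus> e \<notin> Q"
      using sum e primeideal_one_notin[OF PQ_prime(1)] primeideal_one_notin[OF PQ_prime(2)]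
        additive_subgroup.a_closed[OF ideal.axioms(1)[OF primeideal.axioms(1)[OF PQ_prime(1)]]]
        additive_subgroup.a_closed[OF ideal.axioms(1)[OF primeideal.axioms(1)[OF PQ_prime(2)]]]
      by metis+
    moreover have "kills e i \<or> kills (\<one> \<ominus> e) i" using dich i e(1,2) by blast
    moreover have "\<one> \<ominus> e \<in> carrier R" using e(1) by simp
    ultimately show False using PQ e(1) unfolding bad_def by blast
  qed
  have "card (bad i) \<le> 1" if "i < n" for i
  proof -
    have "finite (bad i)" using F(1) unfolding bad_def by simp
    then show ?thesis using unique[OF that] by (simp add: card_le_Suc0_iff_eq)
  qed
  then have bound: "card (\<Union>i<n. bad i) \<le> n"
    using card_UN_le[of "{..<n}" bad] sum_bounded_above[of "{..<n}" "\<lambda>i. card (bad i)" 1] by simp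
  have "finite (\<Union>i<n. bad i)" using F(1) unfolding bad_def by simp
  then have "\<not> F \<subseteq> (\<Union>i<n. bad i)" using card_mono bound F(2) by (meson leD le_trans)
  then show ?thesis unfolding bad_def by blast
qed

theorem proposition2p9:
  fixes R :: "'a ring"
  assumes "arithmetic R"
    and "compactin (zariski R) (Minspec R)"
    and "\<forall>M :: 'a std_module. module R M \<and> fin_gen R M \<longrightarrow> has_pcs_ic R M"
  shows "finite (Minspec R)"
proof (rule ccontr)
  assume "infinite (Minspec R)"
  interpret cring R using assms(1) unfolding arithmetic_def by blast
  let ?M = "regular_module R"
  have "has_pcs_ic R ?M" using assms(3) regular_module regular_module_fin_gen by blast
  then obtain Ms n where Ms: "Ms 0 = {\<zero>\<^bsub>?M\<^esub>}" "Ms n = carrier ?M" "\<forall>i\<le>n. Ms i \<subseteq> carrier ?M"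
    and dich: "\<forall>i<n. \<forall>e\<in>carrier R. e \<otimes>\<^bsub>R\<^esub> e = e \<longrightarrow> (\<forall>x\<in>Ms (Suc i). e \<odot>\<^bsub>?M\<^esub> x \<in> Ms i) \<or>
       (\<forall>x\<in>Ms (Suc i). (\<one>\<^bsub>R\<^esub> \<ominus>\<^bsub>R\<^esub> e) \<odot>\<^bsub>?M\<^esub> x \<in> Ms i)"
    using has_pcs_ic_idempotent_dichotomy[OF regular_module] by blast
  obtain F where F: "F \<subseteq> Minspec R" "finite F" "card F = Suc n"
    using infinite_arbitrarily_large[OF \<open>infinite (Minspec R)\<close>] by blast
  have "\<forall>P\<in>F. primeideal P R" using F(1) unfolding Minspec_def by blast
  moreover have "\<forall>P\<in>F. \<forall>Q\<in>F. P \<noteq> Q \<longrightarrow>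
      (\<exists>e\<in>carrier R. e \<otimes>\<^bsub>R\<^esub> e = e \<and> e \<in> Q \<and> \<one>\<^bsub>R\<^esub> \<ominus>\<^bsub>R\<^esub> e \<in> P)"
    using arithmetic_Minspec_separated_by_idempotent[OF assms(1,2)] F(1) by blast
  ultimately have "\<exists>P\<in>F. \<forall>i<n. \<exists>c\<in>carrier R - P. \<forall>x\<in>Ms (Suc i). c \<odot>\<^bsub>?M\<^esub> x \<in> Ms i"
    using F(3) dich by (intro separated_primeideals_pigeonhole[OF F(2)]) auto
  then obtain P where P: "P \<in> F" "\<forall>i<n. \<exists>c\<in>carrier R - P. \<forall>x\<in>Ms (Suc i). c \<odot>\<^bsub>?M\<^esub> x \<in> Ms i"
    by blast
  have "primeideal P R" using P(1) \<open>\<forall>P\<in>F. primeideal P R\<close> by blast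
  then obtain c where c: "c \<in> carrier R - P" "\<forall>x\<in>carrier ?M. c \<odot>\<^bsub>?M\<^esub> x \<in> {\<zero>\<^bsub>?M\<^esub>}"
    using chain_annihilated_outside_primeideal[OF regular_module _ Ms(3) P(2)] Ms(1,2) by auto
  then have "c = \<zero>\<^bsub>R\<^esub>" using c(2)[rule_format, of "{[\<one>\<^bsub>R\<^esub>]}"] by simp
  then show False using c(1) additive_subgroup.zero_closed[OF ideal.axioms(1)[OF primeideal.axioms(1)[OF \<open>primeideal P R\<close>]]] by simp
qed

end
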